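(* Let $\gamma=(1+\sqrt5)/2$ and let $(r_i)_{i\ge0}$ be a sequence of positive real numbers. Suppose there are constants $c_1,c_2>0$ such that $c_1r_ir_{i+1}\le r_{i+2}\le c_2r_ir_{i+1}$ for all $i\ge0$. Then there are constants $c_3,c_4>0$ such that $c_3r_i^\gamma\le r_{i+1}\le c_4r_i^\gamma$ for all $i\ge0$. *)

theory Defs
  imports Complex_Main
begin

end

theory Submission
  imports Defs
begin

text \<open>Pass to logarithms \<open>l i = ln (r i)\<close>. The hypothesis says that \<open>l\<close> satisfies the Fibonacci
  recurrence up to a bounded error. The quantity \<open>t i = l (i + 1) - \<gamma> l i\<close> then obeys
  \<open>t (i + 1) = (1 - \<gamma>) t i + O(1)\<close>, and since \<open>\<bar>1 - \<gamma>\<bar> = 1 / \<gamma> < 1\<close> this contraction keeps \<open>t\<close>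
  bounded. Exponentiating \<open>\<bar>t i\<bar> \<le> M\<close> gives the claim with \<open>c\<^sub>3 = exp (-M)\<close>, \<open>c\<^sub>4 = exp M\<close>.\<close>

definition golden_ratio :: real where
  "golden_ratio = (1 + sqrt 5) / 2"

lemma golden_ratio_sq: "golden_ratio\<^sup>2 = golden_ratio + 1"
  unfolding golden_ratio_def by (simp add: power2_eq_square field_simps)

lemma golden_ratio_bounds: "1 < golden_ratio" "golden_ratio < 2"
proof -
  have "1 < sqrt 5" "sqrt 5 < 3"
    by (simp_all add: real_sqrt_less_iff real_less_lsqrt)
  then show "1 < golden_ratio" "golden_ratio < 2"
    unfolding golden_ratio_def by simp_all
qed

lemma perturbed_contraction_bounded:
  fixes t :: "nat \<Rightarrow> real"
  assumes "\<bar>a\<bar> < 1" and dev: "\<And>i. \<bar>t (Suc i) - a * t i\<bar> \<le> K"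
  shows "\<bar>t i\<bar> \<le> \<bar>t 0\<bar> + K / (1 - \<bar>a\<bar>)"
proof (induction i)
  case 0
  have "K \<ge> 0" using dev[of 0] by linarith
  with assms(1) show ?case by simp
next
  case (Suc i)
  define M where "M = \<bar>t 0\<bar> + K / (1 - \<bar>a\<bar>)"
  have "\<bar>t (Suc i)\<bar> \<le> K + \<bar>a\<bar> * \<bar>t i\<bar>"
    using dev[of i] abs_triangle_ineq[of "t (Suc i) - a * t i" "a * t i"] by (simp add: abs_mult)
  also have "\<dots> \<le> K + \<bar>a\<bar> * M"
    using Suc.IH unfolding M_def by (simp add: mult_left_mono)
  also have "\<dots> \<le> M"
  proof -
    have "(1 - \<bar>a\<bar>) * M = (1 - \<bar>a\<bar>) * \<bar>t 0\<bar> + K"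
      unfolding M_def using assms(1) by (simp add: distrib_left)
    moreover have "(1 - \<bar>a\<bar>) * M = M - \<bar>a\<bar> * M"
      by (simp add: algebra_simps)
    moreover have "0 \<le> (1 - \<bar>a\<bar>) * \<bar>t 0\<bar>"
      using assms(1) by simp
    ultimately show ?thesis by linarith
  qed
  finally show ?case unfolding M_def .
qed

lemma almost_fibonacci_golden_deviation_bounded:
  fixes l :: "nat \<Rightarrow> real"
  assumes "\<And>i. \<bar>l (Suc (Suc i)) - l (Suc i) - l i\<bar> \<le> K"
  shows "\<exists>M. \<forall>i. \<bar>l (Suc i) - golden_ratio * l i\<bar> \<le> M"
proof -
  define t where "t i = l (Suc i) - golden_ratio * l i" for i
  have "\<bar>1 - golden_ratio\<bar> < 1"
    using golden_ratio_bounds by simp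
  moreover have "t (Suc i) - (1 - golden_ratio) * t i = l (Suc (Suc i)) - l (Suc i) - l i" for i
    using golden_ratio_sq unfolding t_def power2_eq_square by algebra
  then have "\<bar>t (Suc i) - (1 - golden_ratio) * t i\<bar> \<le> K" for i
    using assms by simp
  ultimately have "\<bar>t i\<bar> \<le> \<bar>t 0\<bar> + K / (1 - \<bar>1 - golden_ratio\<bar>)" for i
    by (rule perturbed_contraction_bounded)
  then show ?thesis
    unfolding t_def by blast
qed

lemma abs_ln_diff_le_of_ratio_bounds:
  fixes x y c1 c2 :: real
  assumes "0 < x" "0 < c1" "c1 * x \<le> y" "y \<le> c2 * x"
  shows "\<bar>ln y - ln x\<bar> \<le> max \<bar>ln c1\<bar> \<bar>ln c2\<bar>"
proof -
  have "0 < c1 * x"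
    using assms by simp
  then have "0 < y"
    using assms(3) by linarith
  moreover from this have "0 < c2 * x"
    using assms(4) by linarith
  then have "0 < c2"
    using assms(1) by (simp add: zero_less_mult_iff)
  ultimately have "ln (c1 * x) \<le> ln y" "ln y \<le> ln (c2 * x)"
    using assms by (simp_all add: ln_le_cancel_iff)
  with \<open>0 < c2\<close> have "ln c1 \<le> ln y - ln x" "ln y - ln x \<le> ln c2"
    using assms by (simp_all add: ln_mult)
  then show ?thesis by linarith
qed

lemma ratio_bounds_of_abs_ln_diff_le:
  fixes x y M :: real
  assumes "0 < x" "0 < y" "\<bar>ln y - ln x\<bar> \<le> M"
  shows "exp (- M) * x \<le> y" "y \<le> exp M * x"
proof -
  have "y = exp (ln y - ln x) * x"
    using assms by (simp add: exp_diff)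
  moreover have "exp (- M) \<le> exp (ln y - ln x)" "exp (ln y - ln x) \<le> exp M"
    using assms(3) by simp_all
  ultimately show "exp (- M) * x \<le> y" "y \<le> exp M * x"
    using assms(1) by (metis mult_right_mono less_imp_le)+
qed

theorem lemma5p2:
  fixes r :: "nat \<Rightarrow> real" and c1 c2 :: real
  assumes pos: "\<And>i. r i > 0"
    and c1: "c1 > 0" and c2: "c2 > 0"
    and rec: "\<And>i. c1 * r i * r (Suc i) \<le> r (Suc (Suc i)) \<and> r (Suc (Suc i)) \<le> c2 * r i * r (Suc i)"
  shows "\<exists>c3 c4. c3 > 0 \<and> c4 > 0 \<and>
           (\<forall>i. c3 * r i powr ((1 + sqrt 5) / 2) \<le> r (Suc i) \<and>
                r (Suc i) \<le> c4 * r i powr ((1 + sqrt 5) / 2))"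
proof -
  define l where "l i = ln (r i)" for i
  have "\<bar>l (Suc (Suc i)) - l (Suc i) - l i\<bar> \<le> max \<bar>ln c1\<bar> \<bar>ln c2\<bar>" for i
    using abs_ln_diff_le_of_ratio_bounds[of "r i * r (Suc i)" c1 "r (Suc (Suc i))" c2]
      pos[of i] pos[of "Suc i"] c1 rec[of i]
    unfolding l_def by (simp add: ln_mult algebra_simps)
  then obtain M where "\<bar>l (Suc i) - golden_ratio * l i\<bar> \<le> M" for i
    using almost_fibonacci_golden_deviation_bounded by blast
  then have "\<bar>ln (r (Suc i)) - ln (r i powr golden_ratio)\<bar> \<le> M" for i
    using pos[of i] unfolding l_def by simp
  then have "exp (- M) * r i powr golden_ratio \<le> r (Suc i) \<and>
      r (Suc i) \<le> exp M * r i powr golden_ratio" for i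
    using ratio_bounds_of_abs_ln_diff_le pos[of i] pos[of "Suc i"] by simp
  then show ?thesis
    unfolding golden_ratio_def by (intro exI[of _ "exp (- M)"] exI[of _ "exp M"]) simp
qed

end
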